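(* Let $G$ be a finite simple graph of order $n\ge 4$ without isolated vertices and with maximum degree $\Delta(G)=n-3$. Fix a vertex $v$ with $\deg(v)=\Delta(G)$. (i) If $G$ is disconnected, then $\gamma_t(G)=4$ and $TDV(v)=n-3$. (ii) If $G$ is connected, then either $\gamma_t(G)=2$ and $TDV(v)\le n-3$, or $\gamma_t(G)=3$ and $TDV(v)\le \left(\frac{n-3}{2}\right)^2+2(n-4)$.
   Context: A set $D \subseteq V(G)$ is a total dominating set of $G$ if every vertex of $G$ has a neighbor in $D$. $\gamma_t(G)$ is the minimum cardinality of a total dominating set; a minimum one is a $\gamma_t(G)$-set. $TDV(v)$ is the number of $\gamma_t(G)$-sets containing $v$. *)

theory Defs
  imports Complex_Main
begin

definition simple_graph :: "'a set \<Rightarrow> ('a \<Rightarrow> 'a \<Rightarrow> bool) \<Rightarrow> bool" where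
  "simple_graph V E \<longleftrightarrow> finite V \<and> (\<forall>x y. E x y \<longrightarrow> x \<in> V \<and> y \<in> V)
     \<and> (\<forall>x y. E x y \<longrightarrow> E y x) \<and> (\<forall>x. \<not> E x x)"

definition neighbors :: "'a set \<Rightarrow> ('a \<Rightarrow> 'a \<Rightarrow> bool) \<Rightarrow> 'a \<Rightarrow> 'a set" where
  "neighbors V E v = {u \<in> V. E v u}"

definition degree :: "'a set \<Rightarrow> ('a \<Rightarrow> 'a \<Rightarrow> bool) \<Rightarrow> 'a \<Rightarrow> nat" where
  "degree V E v = card (neighbors V E v)"

definition max_degree :: "'a set \<Rightarrow> ('a \<Rightarrow> 'a \<Rightarrow> bool) \<Rightarrow> nat" where
  "max_degree V E = Max (degree V E ` V)"

definition no_isolated :: "'a set \<Rightarrow> ('a \<Rightarrow> 'a \<Rightarrow> bool) \<Rightarrow> bool" where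
  "no_isolated V E \<longleftrightarrow> (\<forall>v\<in>V. neighbors V E v \<noteq> {})"

definition connected_graph :: "'a set \<Rightarrow> ('a \<Rightarrow> 'a \<Rightarrow> bool) \<Rightarrow> bool" where
  "connected_graph V E \<longleftrightarrow> V \<noteq> {} \<and> (\<forall>x\<in>V. \<forall>y\<in>V. E\<^sup>*\<^sup>* x y)"

definition total_dominating :: "'a set \<Rightarrow> ('a \<Rightarrow> 'a \<Rightarrow> bool) \<Rightarrow> 'a set \<Rightarrow> bool" where
  "total_dominating V E D \<longleftrightarrow> D \<subseteq> V \<and> (\<forall>v\<in>V. \<exists>u\<in>D. E v u)"

definition gamma_t :: "'a set \<Rightarrow> ('a \<Rightarrow> 'a \<Rightarrow> bool) \<Rightarrow> nat" where
  "gamma_t V E = (LEAST k. \<exists>D. total_dominating V E D \<and> card D = k)"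

definition gamma_t_sets :: "'a set \<Rightarrow> ('a \<Rightarrow> 'a \<Rightarrow> bool) \<Rightarrow> 'a set set" where
  "gamma_t_sets V E = {D. total_dominating V E D \<and> card D = gamma_t V E}"

definition TDV :: "'a set \<Rightarrow> ('a \<Rightarrow> 'a \<Rightarrow> bool) \<Rightarrow> 'a \<Rightarrow> nat" where
  "TDV V E v = card {D \<in> gamma_t_sets V E. v \<in> D}"

end

theory Submission
  imports Defs
begin

text \<open>
  Since \<open>deg v = n - 3\<close>, exactly two vertices \<open>a\<close>, \<open>b\<close> lie outside the closed neighbourhood
  of \<open>v\<close>, and \<open>G\<close> is connected iff one of them has a neighbour in \<open>N(v)\<close>. Otherwise \<open>ab\<close> is a
  component \<open>K\<^sub>2\<close>: every total dominating set contains \<open>a\<close>, \<open>b\<close>, some \<open>r \<in> N(v)\<close> and a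
  neighbour of \<open>r\<close>, so \<open>\<gamma>\<^sub>t = 4\<close> and the minimum sets through \<open>v\<close> are exactly \<open>{a, b, v, u}\<close>,
  \<open>u \<in> N(v)\<close>.

  In the connected case \<open>v\<close> together with a dominator of \<open>a\<close> and one of \<open>b\<close> gives \<open>\<gamma>\<^sub>t \<le> 3\<close>.
  If \<open>\<gamma>\<^sub>t = 3\<close>, no vertex of \<open>N(v)\<close> is adjacent to both \<open>a\<close> and \<open>b\<close>, and every minimum set
  through \<open>v\<close> is \<open>{v, p, q}\<close> with \<open>p \<sim> a\<close>, \<open>q \<sim> b\<close>, \<open>(p, q) \<noteq> (b, a)\<close>. With
  \<open>A = N(a) \<inter> N(v)\<close>, \<open>B = N(b) \<inter> N(v)\<close> disjoint this gives
  \<open>TDV(v) \<le> (|A| + 1)(|B| + 1) - 1\<close>, and AM-GM finishes, using \<open>n \<ge> 5\<close>: a common neighbour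
  of \<open>v\<close> and \<open>a\<close> has degree at least 2.
\<close>

lemma gamma_t_le:
  assumes "total_dominating V E D"
  shows "gamma_t V E \<le> card D"
  unfolding gamma_t_def by (rule Least_le) (use assms in blast)

lemma gamma_t_attained:
  assumes "total_dominating V E D"
  obtains D' where "total_dominating V E D'" "card D' = gamma_t V E"
proof -
  have "\<exists>D'. total_dominating V E D' \<and> card D' = gamma_t V E"
    unfolding gamma_t_def by (rule LeastI_ex) (use assms in blast)
  then show ?thesis using that by blast
qed

lemma gamma_t_eqI:
  assumes "total_dominating V E D" "card D = k"
    and "\<And>D'. total_dominating V E D' \<Longrightarrow> k \<le> card D'"
  shows "gamma_t V E = k"
  unfolding gamma_t_def by (rule Least_equality) (use assms in blast)+

lemma total_dominating_finite:
  "simple_graph V E \<Longrightarrow> total_dominating V E D \<Longrightarrow> finite D"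
  unfolding simple_graph_def total_dominating_def by (meson finite_subset)

lemma card_total_dominating_ge_2:
  assumes G: "simple_graph V E" and "w \<in> V" and D: "total_dominating V E D"
  shows "2 \<le> card D"
proof -
  obtain u where u: "u \<in> D" "E w u" using assms unfolding total_dominating_def by blast
  then have "u \<in> V" using G unfolding simple_graph_def by blast
  then obtain u' where u': "u' \<in> D" "E u u'" using D unfolding total_dominating_def by blast
  then have "u \<noteq> u'" using G unfolding simple_graph_def by blast
  then have "card {u, u'} = 2" by simp
  moreover have "{u, u'} \<subseteq> D" using u u' by blast
  ultimately show ?thesis using card_mono[OF total_dominating_finite[OF G D]] by metis
qed

lemma total_dominating_vertex_set:
  "simple_graph V E \<Longrightarrow> no_isolated V E \<Longrightarrow> total_dominating V E V"
  unfolding total_dominating_def no_isolated_def neighbors_def by blast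

lemma gamma_t_ge_2:
  assumes "simple_graph V E" "no_isolated V E" "w \<in> V"
  shows "2 \<le> gamma_t V E"
proof -
  obtain D where "total_dominating V E D" "card D = gamma_t V E"
    using gamma_t_attained[OF total_dominating_vertex_set[OF assms(1,2)]] .
  then show ?thesis using card_total_dominating_ge_2[OF assms(1,3)] by metis
qed

lemma degree_le_max_degree:
  "simple_graph V E \<Longrightarrow> x \<in> V \<Longrightarrow> degree V E x \<le> max_degree V E"
  unfolding max_degree_def simple_graph_def by (intro Max_ge) simp_all

lemma connected_graphI:
  assumes G: "simple_graph V E" and "v \<in> V" and reach: "\<And>w. w \<in> V \<Longrightarrow> E\<^sup>*\<^sup>* v w"
  shows "connected_graph V E"
proof -
  have "symp E" using G unfolding simple_graph_def symp_def by blast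
  have reach_back: "E\<^sup>*\<^sup>* w v" if "w \<in> V" for w
    by (rule sympD[OF symp_rtranclp[OF \<open>symp E\<close>] reach[OF that]])
  have "E\<^sup>*\<^sup>* x y" if "x \<in> V" "y \<in> V" for x y
    using rtranclp_trans[OF reach_back[OF that(1)] reach[OF that(2)]] .
  then show ?thesis unfolding connected_graph_def using \<open>v \<in> V\<close> by blast
qed

lemma not_connected_graphI:
  assumes "v \<in> V" "v \<in> C" "w \<in> V" "w \<notin> C" and closed: "\<And>x y. x \<in> C \<Longrightarrow> E x y \<Longrightarrow> y \<in> C"
  shows "\<not> connected_graph V E"
proof -
  have "y \<in> C" if "E\<^sup>*\<^sup>* v y" for y
    using that
  proof (induction rule: rtranclp_induct)
    case base
    show ?case by (fact \<open>v \<in> C\<close>)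
  next
    case (step y z)
    then show ?case using closed by blast
  qed
  then show ?thesis unfolding connected_graph_def using assms(1,3,4) by blast
qed

lemma real_product_bound:
  fixes p q m T :: nat
  assumes "p + q \<le> m" "2 \<le> m" "T + 1 \<le> (p + 1) * (q + 1)"
  shows "real T \<le> (real m / 2)^2 + 2 * (real m - 1)"
proof -
  define x y where "x = real p" and "y = real q"
  have sum: "x + y \<le> real m" and nonneg: "0 \<le> x" "0 \<le> y"
    using assms(1) unfolding x_def y_def by linarith+
  have "T \<le> p * q + p + q"
    using assms(3) by simp
  then have "real T \<le> x * y + x + y"
    unfolding x_def y_def by (metis of_nat_add of_nat_le_iff of_nat_mult)
  moreover have "x * y \<le> (real m / 2)^2"
  proof -
    have "4 * (x * y) \<le> (x + y)^2"
      using zero_le_power2[of "x - y"] by (simp add: power2_eq_square algebra_simps)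
    also have "\<dots> \<le> (real m)^2"
      using sum nonneg by (intro power_mono) simp_all
    finally show ?thesis by (simp add: power_divide)
  qed
  moreover have "x + y \<le> 2 * (real m - 1)"
    using sum assms(2) by (simp add: of_nat_le_iff[of 2 m, symmetric])
  ultimately show ?thesis by linarith
qed

lemma card_insert_times_insert_Diff:
  assumes "finite A" "finite B" "b \<notin> A" "a \<notin> B"
  shows "card ((insert b A \<times> insert a B) - {(b, a)}) + 1 = (card A + 1) * (card B + 1)"
proof -
  let ?P = "insert b A \<times> insert a B"
  have "card ?P = (card A + 1) * (card B + 1)"
    using assms by (simp only: card_cartesian_product) simp
  moreover have fin: "finite ?P" and corner: "(b, a) \<in> ?P" using assms(1,2) by simp_all
  have "card (?P - {(b, a)}) = card ?P - 1" using corner by (rule card_Diff_singleton)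
  moreover have "0 < card ?P" using fin corner card_gt_0_iff by blast
  ultimately show ?thesis by linarith
qed

locale two_non_neighbours =
  fixes V :: "'a set" and E :: "'a \<Rightarrow> 'a \<Rightarrow> bool" and v a b :: 'a
  assumes simple: "simple_graph V E"
    and no_isolated: "no_isolated V E"
    and centre_in_V: "v \<in> V"
    and a_ne_b: "a \<noteq> b"
    and non_neighbours: "V - insert v (neighbors V E v) = {a, b}"
begin

abbreviation N :: "'a set" where
  "N \<equiv> neighbors V E v"

lemma
  shows finite_V: "finite V"
    and adj_in_V: "E x y \<Longrightarrow> x \<in> V" "E x y \<Longrightarrow> y \<in> V"
    and adj_sym: "E x y \<Longrightarrow> E y x"
    and adj_irrefl: "\<not> E x x"
  using simple unfolding simple_graph_def by blast+

lemma in_N_iff: "x \<in> N \<longleftrightarrow> x \<in> V \<and> E v x"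
  unfolding neighbors_def by simp

lemma finite_N: "finite N"
  using finite_V unfolding neighbors_def by simp

lemma centre_not_in_N: "v \<notin> N"
  using adj_irrefl in_N_iff by blast

lemma
  shows a_in_V: "a \<in> V" and a_not_in_N: "a \<notin> N" and a_ne_centre: "a \<noteq> v"
    and not_adj_centre_a: "\<not> E v a" "\<not> E a v"
    and b_in_V: "b \<in> V" and b_not_in_N: "b \<notin> N" and b_ne_centre: "b \<noteq> v"
    and not_adj_centre_b: "\<not> E v b" "\<not> E b v"
  using non_neighbours in_N_iff adj_sym by blast+

lemma vertex_cases: "w \<in> V \<Longrightarrow> w = v \<or> w \<in> N \<or> w = a \<or> w = b"
  using non_neighbours by blast

lemma swap: "two_non_neighbours V E v b a"
  using simple no_isolated centre_in_V a_ne_b non_neighbours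
  by unfold_locales (simp_all add: insert_commute)

lemma card_V: "card V = card N + 3"
proof -
  have "V = insert v N \<union> {a, b}" and "insert v N \<inter> {a, b} = {}"
    using non_neighbours in_N_iff centre_in_V by auto
  then show ?thesis
    using finite_N centre_not_in_N a_ne_b card_Un_disjoint[of "insert v N" "{a, b}"] by simp
qed

lemma adj_a_cases: "E a u \<Longrightarrow> u \<in> N \<or> u = b"
  using vertex_cases[of u] adj_in_V not_adj_centre_a adj_irrefl by blast

lemma exists_adj: "w \<in> V \<Longrightarrow> \<exists>u. E w u"
  using no_isolated unfolding no_isolated_def neighbors_def by blast

lemma connected_if_adj_a:
  assumes "x \<in> N" "E a x"
  shows "connected_graph V E"
proof -
  interpret ba: two_non_neighbours V E v b a by (rule swap)
  have reach_N: "E\<^sup>*\<^sup>* v y" if "y \<in> N" for y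
    using that in_N_iff by blast
  have reach_a: "E\<^sup>*\<^sup>* v a"
    using reach_N[OF assms(1)] adj_sym[OF assms(2)] by (rule rtranclp.rtrancl_into_rtrancl)
  have reach_b: "E\<^sup>*\<^sup>* v b"
  proof -
    obtain u where u: "E b u" using exists_adj[OF b_in_V] by blast
    then have "E\<^sup>*\<^sup>* v u" using ba.adj_a_cases reach_N reach_a by blast
    then show ?thesis using adj_sym[OF u] by (rule rtranclp.rtrancl_into_rtrancl)
  qed
  show ?thesis
  proof (rule connected_graphI[OF simple centre_in_V])
    fix w assume "w \<in> V"
    then show "E\<^sup>*\<^sup>* v w" using vertex_cases[of w] reach_N reach_a reach_b by auto
  qed
qed

lemma connected_iff: "connected_graph V E \<longleftrightarrow> (\<exists>x\<in>N. E a x \<or> E b x)"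
proof
  interpret ba: two_non_neighbours V E v b a by (rule swap)
  show "\<exists>x\<in>N. E a x \<or> E b x" if "connected_graph V E"
  proof (rule ccontr)
    assume unattached: "\<not> (\<exists>x\<in>N. E a x \<or> E b x)"
    have closed: "y \<in> V - {a, b}" if "x \<in> V - {a, b}" "E x y" for x y
      using that unattached vertex_cases[of y] adj_in_V adj_sym adj_a_cases ba.adj_a_cases by blast
    have "\<not> connected_graph V E"
      by (rule not_connected_graphI[of v V "V - {a, b}" a, OF _ _ a_in_V _ closed])
        (use centre_in_V a_ne_centre b_ne_centre in auto)
    then show False using that by blast
  qed
  show "connected_graph V E" if "\<exists>x\<in>N. E a x \<or> E b x"
    using that connected_if_adj_a ba.connected_if_adj_a by blast
qed

lemma pendant_edge: "\<not> connected_graph V E \<Longrightarrow> E a u \<longleftrightarrow> u = b"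
  using connected_iff adj_a_cases exists_adj[OF a_in_V] by blast

lemma total_dominating_with_centre:
  assumes "v \<in> D" "D \<subseteq> V" "D \<inter> N \<noteq> {}" "\<exists>u\<in>D. E a u" "\<exists>u\<in>D. E b u"
  shows "total_dominating V E D"
  unfolding total_dominating_def
proof (intro conjI ballI)
  show "D \<subseteq> V" by (fact assms(2))
  fix w assume "w \<in> V"
  then consider "w = v" | "w \<in> N" | "w = a" | "w = b" using vertex_cases by blast
  then show "\<exists>u\<in>D. E w u"
    by cases (use assms in_N_iff adj_sym in blast)+
qed

lemma total_dominating_meets_N:
  assumes "total_dominating V E D"
  obtains r where "r \<in> D" "r \<in> N"
  using assms centre_in_V adj_in_V in_N_iff unfolding total_dominating_def by blast

lemma N_nonempty: "N \<noteq> {}"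
  using exists_adj[OF centre_in_V] adj_in_V in_N_iff by blast

context
  assumes disconnected: "\<not> connected_graph V E"
begin

lemma pendant_in_total_dominating:
  assumes "total_dominating V E D"
  shows "a \<in> D" "b \<in> D"
proof -
  interpret ba: two_non_neighbours V E v b a by (rule swap)
  obtain u where "u \<in> D" "E b u" using assms b_in_V unfolding total_dominating_def by blast
  then show "a \<in> D" using ba.pendant_edge[OF disconnected] by metis
  obtain w where "w \<in> D" "E a w" using assms a_in_V unfolding total_dominating_def by blast
  then show "b \<in> D" using pendant_edge[OF disconnected] by metis
qed

lemma card_total_dominating_ge_4:
  assumes D: "total_dominating V E D"
  shows "4 \<le> card D"
proof -
  interpret ba: two_non_neighbours V E v b a by (rule swap)
  obtain r where r: "r \<in> D" "r \<in> N" using total_dominating_meets_N[OF D] .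
  obtain s where s: "s \<in> D" "E r s" using D r in_N_iff unfolding total_dominating_def by blast
  have "s \<noteq> a" "s \<noteq> b"
    using s r a_not_in_N b_not_in_N adj_sym pendant_edge[OF disconnected, of r]
      ba.pendant_edge[OF disconnected, of r] by blast+
  moreover have "s \<noteq> r" "r \<noteq> a" "r \<noteq> b"
    using s r adj_irrefl a_not_in_N b_not_in_N by blast+
  ultimately have "card {a, b, r, s} = 4" using a_ne_b by auto
  moreover have "{a, b, r, s} \<subseteq> D" using pendant_in_total_dominating[OF D] r s by blast
  ultimately show ?thesis
    using card_mono[OF total_dominating_finite[OF simple D]] by metis
qed

lemma total_dominating_pendant_set:
  assumes "u \<in> N"
  shows "total_dominating V E {a, b, v, u}"
proof (rule total_dominating_with_centre)
  show "{a, b, v, u} \<subseteq> V" using assms centre_in_V a_in_V b_in_V in_N_iff by blast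
  have "E a b" using pendant_edge[OF disconnected, of b] by simp
  then show "\<exists>w\<in>{a, b, v, u}. E a w" "\<exists>w\<in>{a, b, v, u}. E b w"
    using adj_sym by blast+
qed (use assms in blast)+

lemma card_pendant_set:
  assumes "u \<in> N"
  shows "card {a, b, v, u} = 4"
proof -
  have "u \<noteq> a" "u \<noteq> b" "u \<noteq> v"
    using assms a_not_in_N b_not_in_N centre_not_in_N by blast+
  then show ?thesis using a_ne_b a_ne_centre b_ne_centre by simp
qed

lemma gamma_t_disconnected: "gamma_t V E = 4"
proof -
  obtain u where u: "u \<in> N" using N_nonempty by blast
  show ?thesis
    by (rule gamma_t_eqI[OF total_dominating_pendant_set[OF u] card_pendant_set[OF u]
          card_total_dominating_ge_4])
qed

lemma TDV_disconnected: "TDV V E v = card N"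
proof -
  have "{D \<in> gamma_t_sets V E. v \<in> D} = (\<lambda>u. {a, b, v, u}) ` N"
  proof (intro equalityI subsetI)
    fix D assume "D \<in> {D \<in> gamma_t_sets V E. v \<in> D}"
    then have D: "total_dominating V E D" "card D = 4" "v \<in> D"
      unfolding gamma_t_sets_def gamma_t_disconnected by auto
    obtain r where r: "r \<in> D" "r \<in> N" using total_dominating_meets_N[OF D(1)] .
    have "{a, b, v, r} \<subseteq> D" using pendant_in_total_dominating[OF D(1)] r D(3) by blast
    then have "{a, b, v, r} = D"
      using card_subset_eq[OF total_dominating_finite[OF simple D(1)]] card_pendant_set[OF r(2)] D(2)
      by metis
    then show "D \<in> (\<lambda>u. {a, b, v, u}) ` N" using r(2) by blast
  next
    fix D assume "D \<in> (\<lambda>u. {a, b, v, u}) ` N"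
    then obtain u where "u \<in> N" "D = {a, b, v, u}" by blast
    then show "D \<in> {D \<in> gamma_t_sets V E. v \<in> D}"
      using total_dominating_pendant_set card_pendant_set gamma_t_disconnected
      unfolding gamma_t_sets_def by simp
  qed
  moreover have "inj_on (\<lambda>u. {a, b, v, u}) N"
  proof (rule inj_onI)
    fix x y assume "x \<in> N" "y \<in> N" "{a, b, v, x} = {a, b, v, y}"
    then have "x \<in> {a, b, v, y}" "x \<noteq> a" "x \<noteq> b" "x \<noteq> v"
      using a_not_in_N b_not_in_N centre_not_in_N by blast+
    then show "x = y" by blast
  qed
  ultimately show ?thesis unfolding TDV_def by (simp add: card_image)
qed

end

lemma total_dominating_triple_if_adj_a:
  assumes x: "x \<in> N" "E a x"
  obtains D where "total_dominating V E D" "card D \<le> 3"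
proof (cases "\<exists>y\<in>N. E b y")
  case True
  then obtain y where y: "y \<in> N" "E b y" by blast
  have "total_dominating V E {v, x, y}"
    using x y centre_in_V in_N_iff by (intro total_dominating_with_centre) auto
  moreover have "card {v, x, y} \<le> 3" by (simp add: card_insert_le_m1)
  ultimately show ?thesis by (rule that)
next
  case False
  interpret ba: two_non_neighbours V E v b a by (rule swap)
  obtain u where "E b u" using exists_adj[OF b_in_V] by blast
  with False have "E b a" using ba.adj_a_cases by blast
  then have "total_dominating V E {v, x, a}"
    using x centre_in_V a_in_V in_N_iff by (intro total_dominating_with_centre) auto
  moreover have "card {v, x, a} \<le> 3" by (simp add: card_insert_le_m1)
  ultimately show ?thesis by (rule that)
qed

lemma gamma_t_le_3_if_connected:
  assumes "connected_graph V E"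
  shows "gamma_t V E \<le> 3"
proof -
  interpret ba: two_non_neighbours V E v b a by (rule swap)
  obtain x where "x \<in> N" "E a x \<or> E b x" using assms connected_iff by blast
  then obtain D where "total_dominating V E D" "card D \<le> 3"
    using total_dominating_triple_if_adj_a ba.total_dominating_triple_if_adj_a by blast
  then show ?thesis using gamma_t_le by (metis le_trans)
qed

lemma degree_ge_2_if_adj_a:
  assumes "x \<in> N" "E a x"
  shows "2 \<le> degree V E x"
proof -
  have "{v, a} \<subseteq> neighbors V E x"
    using assms centre_in_V a_in_V in_N_iff adj_sym unfolding neighbors_def by blast
  moreover have "finite (neighbors V E x)" using finite_V unfolding neighbors_def by simp
  ultimately show ?thesis
    unfolding degree_def using a_ne_centre by (metis card_2_iff card_mono)
qed

lemma degree_ge_2_if_connected: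
  assumes "connected_graph V E"
  obtains x where "x \<in> V" "2 \<le> degree V E x"
proof -
  interpret ba: two_non_neighbours V E v b a by (rule swap)
  obtain x where "x \<in> N" "E a x \<or> E b x" using assms connected_iff by blast
  then show ?thesis
    using that in_N_iff degree_ge_2_if_adj_a ba.degree_ge_2_if_adj_a by blast
qed

lemma gamma_t_le_2_if_common_neighbour:
  assumes "x \<in> N" "E a x" "E b x"
  shows "gamma_t V E \<le> 2"
proof -
  have "total_dominating V E {v, x}"
    using assms centre_in_V in_N_iff by (intro total_dominating_with_centre) auto
  moreover have "card {v, x} \<le> 2" by (simp add: card_insert_le_m1)
  ultimately show ?thesis using gamma_t_le by (metis le_trans)
qed

lemma TDV_le_if_gamma_t_2:
  assumes "gamma_t V E = 2"
  shows "TDV V E v \<le> card N"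
proof -
  have "{D \<in> gamma_t_sets V E. v \<in> D} \<subseteq> (\<lambda>u. {v, u}) ` N"
  proof
    fix D assume "D \<in> {D \<in> gamma_t_sets V E. v \<in> D}"
    then have D: "total_dominating V E D" "card D = 2" "v \<in> D"
      using assms unfolding gamma_t_sets_def by auto
    obtain r where r: "r \<in> D" "r \<in> N" using total_dominating_meets_N[OF D(1)] .
    have "r \<noteq> v" using r centre_not_in_N by blast
    then have "card {v, r} = 2" by simp
    then have "{v, r} = D"
      using card_subset_eq[OF total_dominating_finite[OF simple D(1)]] r D by (metis empty_subsetI insert_subset)
    then show "D \<in> (\<lambda>u. {v, u}) ` N" using r by blast
  qed
  then have "TDV V E v \<le> card ((\<lambda>u. {v, u}) ` N)"
    unfolding TDV_def using finite_N by (intro card_mono) auto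
  also have "\<dots> \<le> card N" by (rule card_image_le[OF finite_N])
  finally show ?thesis .
qed

lemma minimum_total_dominating_shape_if_gamma_t_3:
  assumes gamma: "gamma_t V E = 3" and "D \<in> gamma_t_sets V E" "v \<in> D"
  obtains p q where "E a p" "E b q" "(p, q) \<noteq> (b, a)" "D = {v, p, q}"
proof -
  have D: "total_dominating V E D" "card D = 3"
    using assms unfolding gamma_t_sets_def by auto
  have fin: "finite D" by (rule total_dominating_finite[OF simple D(1)])
  obtain p where p: "p \<in> D" "E a p" using D(1) a_in_V unfolding total_dominating_def by blast
  obtain q where q: "q \<in> D" "E b q" using D(1) b_in_V unfolding total_dominating_def by blast
  obtain r where r: "r \<in> D" "r \<in> N" using total_dominating_meets_N[OF D(1)] .
  have "p \<noteq> q"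
  proof
    assume "p = q"
    then have "p \<in> N" using adj_a_cases p(2) q(2) adj_irrefl by blast
    then show False using gamma_t_le_2_if_common_neighbour p q \<open>p = q\<close> gamma by fastforce
  qed
  moreover have "p \<noteq> v" "q \<noteq> v" using p q not_adj_centre_a not_adj_centre_b by blast+
  ultimately have "card {v, p, q} = 3" by simp
  then have Dpq: "D = {v, p, q}"
    using card_subset_eq[OF fin, of "{v, p, q}"] p q \<open>v \<in> D\<close> D(2) by simp
  have "(p, q) \<noteq> (b, a)"
  proof
    assume "(p, q) = (b, a)"
    then have "r \<in> {v, b, a}" using r Dpq by simp
    then show False using r centre_not_in_N a_not_in_N b_not_in_N by blast
  qed
  then show ?thesis using that p(2) q(2) Dpq by blast
qed

lemma TDV_bound_if_gamma_t_3:
  assumes gamma: "gamma_t V E = 3"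
  obtains p q where "p + q \<le> card N" "TDV V E v + 1 \<le> (p + 1) * (q + 1)"
proof -
  define A where "A = {x \<in> N. E a x}"
  define B where "B = {x \<in> N. E b x}"
  have fin: "finite A" "finite B" unfolding A_def B_def using finite_N by simp_all
  have disjoint: "A \<inter> B = {}"
    using gamma_t_le_2_if_common_neighbour gamma unfolding A_def B_def by fastforce
  define X where "X = (insert b A \<times> insert a B) - {(b, a)}"
  have "{D \<in> gamma_t_sets V E. v \<in> D} \<subseteq> (\<lambda>(p, q). {v, p, q}) ` X"
  proof
    fix D assume "D \<in> {D \<in> gamma_t_sets V E. v \<in> D}"
    then obtain p q where "E a p" "E b q" "(p, q) \<noteq> (b, a)" "D = {v, p, q}"
      using minimum_total_dominating_shape_if_gamma_t_3[OF gamma] by blast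
    moreover have "p \<in> insert b A" "q \<in> insert a B"
      using \<open>E a p\<close> \<open>E b q\<close> adj_a_cases two_non_neighbours.adj_a_cases[OF swap]
      unfolding A_def B_def by blast+
    ultimately show "D \<in> (\<lambda>(p, q). {v, p, q}) ` X" unfolding X_def by blast
  qed
  then have "TDV V E v \<le> card ((\<lambda>(p, q). {v, p, q}) ` X)"
    unfolding TDV_def X_def using fin by (intro card_mono) auto
  also have "\<dots> \<le> card X" by (rule card_image_le) (simp add: X_def fin)
  finally have "TDV V E v + 1 \<le> (card A + 1) * (card B + 1)"
    using card_insert_times_insert_Diff[OF fin] a_not_in_N b_not_in_N
    unfolding X_def A_def B_def by simp
  moreover have "card A + card B \<le> card N"
    using card_Un_disjoint[OF fin disjoint] card_mono[OF finite_N, of "A \<union> B"]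
    unfolding A_def B_def by auto
  ultimately show ?thesis by (rule that[rotated])
qed

lemma connected_case:
  assumes connected: "connected_graph V E" and "2 \<le> card N"
  shows "(gamma_t V E = 2 \<and> TDV V E v \<le> card N)
    \<or> (gamma_t V E = 3 \<and> real (TDV V E v) \<le> (real (card N) / 2)^2 + 2 * (real (card N) - 1))"
proof -
  have "gamma_t V E = 2 \<or> gamma_t V E = 3"
    using gamma_t_ge_2[OF simple no_isolated centre_in_V] gamma_t_le_3_if_connected[OF connected]
    by linarith
  then show ?thesis
  proof
    assume gamma: "gamma_t V E = 3"
    then obtain p q where pq: "p + q \<le> card N" "TDV V E v + 1 \<le> (p + 1) * (q + 1)"
      by (rule TDV_bound_if_gamma_t_3)
    show ?thesis
      using real_product_bound[OF pq(1) \<open>2 \<le> card N\<close> pq(2)] gamma by simp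
  qed (use TDV_le_if_gamma_t_2 in simp)
qed

end

lemma two_non_neighboursI:
  assumes G: "simple_graph V E" and "no_isolated V E" "v \<in> V"
    and deg: "card V = degree V E v + 3"
  obtains a b where "two_non_neighbours V E v a b"
proof -
  let ?N = "neighbors V E v"
  have fin: "finite V" using G unfolding simple_graph_def by blast
  have "v \<notin> ?N" using G unfolding simple_graph_def neighbors_def by blast
  moreover have "insert v ?N \<subseteq> V" using \<open>v \<in> V\<close> unfolding neighbors_def by blast
  ultimately have "card (V - insert v ?N) = 2"
    using fin deg finite_subset[OF _ fin] unfolding degree_def by (simp add: card_Diff_subset)
  then obtain a b where "V - insert v ?N = {a, b}" "a \<noteq> b" by (auto simp: card_2_iff)
  then show ?thesis using that assms(1-3) by (simp add: two_non_neighbours_def)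
qed

theorem theorem2p17:
  fixes V :: "'a set" and E :: "'a \<Rightarrow> 'a \<Rightarrow> bool" and n :: nat and v :: 'a
  assumes "simple_graph V E"
    and "n = card V" and "n \<ge> 4"
    and "no_isolated V E"
    and "max_degree V E = n - 3"
    and "v \<in> V" and "degree V E v = max_degree V E"
  shows "(\<not> connected_graph V E \<longrightarrow> gamma_t V E = 4 \<and> TDV V E v = n - 3)
       \<and> (connected_graph V E \<longrightarrow>
            (gamma_t V E = 2 \<and> TDV V E v \<le> n - 3)
          \<or> (gamma_t V E = 3 \<and> real (TDV V E v) \<le> ((real n - 3) / 2)^2 + 2 * (real n - 4)))"
proof -
  obtain a b where "two_non_neighbours V E v a b"
    using two_non_neighboursI[OF assms(1,4,6)] assms(2,3,5,7) by force
  then interpret two_non_neighbours V E v a b .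
  have card_N: "card N = n - 3" using card_V assms(2) by simp
  show ?thesis
  proof (rule conjI; intro impI)
    assume "\<not> connected_graph V E"
    then show "gamma_t V E = 4 \<and> TDV V E v = n - 3"
      using gamma_t_disconnected TDV_disconnected card_N by simp
  next
    assume connected: "connected_graph V E"
    obtain x where "x \<in> V" "2 \<le> degree V E x" by (rule degree_ge_2_if_connected[OF connected])
    then have "2 \<le> card N" using degree_le_max_degree[OF assms(1)] assms(5) card_N by fastforce
    then show "(gamma_t V E = 2 \<and> TDV V E v \<le> n - 3)
          \<or> (gamma_t V E = 3 \<and> real (TDV V E v) \<le> ((real n - 3) / 2)^2 + 2 * (real n - 4))"
      using connected_case[OF connected] card_N by (simp add: of_nat_diff)
  qed
qed

end
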